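(* Let $\mathcal{M},\mathcal{Y},\mathcal{S}'$ be finite sets and $\{g_{s'}\}_{s'\in\mathcal{S}'}$, $g_{s'}:\mathcal{M}\times\mathcal{Y}\to\mathcal{Y}$, a family such that (i) $\Pr_{S'}[g_{S'}(m,y)=g_{S'}(\hat m,\hat y)]\le1/|\mathcal{Y}|$ for all $(m,y)\ne(\hat m,\hat y)$ when $S'$ is uniform on $\mathcal{S}'$, and (ii) for every $m\in\mathcal{M}$, $c\in\mathcal{Y}$, $s'\in\mathcal{S}'$ there is a unique $y\in\mathcal{Y}$ with $g_{s'}(m,y)=c$. Let $M'=(M,Y)$ be uniformly distributed on $\mathcal{M}\times\mathcal{Y}$ and correlated with a quantum system $E'$ via the cq state $\rho_{M'E'}=\sum_{m,y}\frac{1}{|\mathcal{M}||\mathcal{Y}|}|m,y\rangle\langle m,y|\otimes\rho_{E'}^{m,y}$. Let $S'$ be uniform on $\mathcal{S}'$ and independent of $(M',E')$, and $C:=g_{S'}(M,Y)$. Then $$d(M;E'S'C)\le d(M';E').$$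
   Context: For a cq state $\rho_{VF}=\sum_vP_V(v)|v\rangle\langle v|\otimes\rho_F^v$ with $V$ taking values in a finite set $\mathcal{V}$, $d(V;F):=\min_{\sigma_F}\|\rho_{VF}-P_{\mathcal{V}}\otimes\sigma_F\|_1$, where $P_{\mathcal{V}}$ is the uniform distribution on $\mathcal{V}$ (as a diagonal density operator) and the minimum is over states $\sigma_F$. In $d(M;E'S'C)$ the system consists of $E'$ together with classical registers holding $S'$ and $C$. *)

theory Defs
  imports Complex_Main
begin

text \<open>Finite-dimensional operators on the Hilbert space with orthonormal basis
  indexed by a finite type 'n are represented by their matrices.\<close>

type_synonym 'n op = "'n \<Rightarrow> 'n \<Rightarrow> complex"

definition opmult :: "('n::finite) op \<Rightarrow> 'n op \<Rightarrow> 'n op" where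
  "opmult A B = (\<lambda>i k. \<Sum>j\<in>UNIV. A i j * B j k)"

definition adj :: "('n::finite) op \<Rightarrow> 'n op" where
  "adj A = (\<lambda>i j. cnj (A j i))"

definition tr :: "('n::finite) op \<Rightarrow> complex" where
  "tr A = (\<Sum>i\<in>UNIV. A i i)"

definition psd :: "('n::finite) op \<Rightarrow> bool" where
  "psd A \<longleftrightarrow> (\<forall>x::'n \<Rightarrow> complex.
      Im (\<Sum>i\<in>UNIV. \<Sum>j\<in>UNIV. cnj (x i) * A i j * x j) = 0 \<and>
      Re (\<Sum>i\<in>UNIV. \<Sum>j\<in>UNIV. cnj (x i) * A i j * x j) \<ge> 0)"

definition density :: "('n::finite) op \<Rightarrow> bool" where
  "density A \<longleftrightarrow> psd A \<and> tr A = 1"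

definition absop :: "('n::finite) op \<Rightarrow> 'n op" where
  "absop A = (THE B. psd B \<and> opmult B B = opmult (adj A) A)"

definition tnorm :: "('n::finite) op \<Rightarrow> real" where
  "tnorm A = Re (tr (absop A))"

definition tensor :: "'a op \<Rightarrow> 'b op \<Rightarrow> ('a \<times> 'b) op" where
  "tensor A B = (\<lambda>(i, k) (j, l). A i j * B k l)"

definition unif_op :: "('v::finite) op" where
  "unif_op = (\<lambda>v w. if v = w then 1 / of_nat (card (UNIV :: 'v set)) else 0)"

text \<open>cq state sum_v P(v) |v><v| \<otimes> rho^v.\<close>
definition cq :: "('v \<Rightarrow> real) \<Rightarrow> ('v \<Rightarrow> 'f op) \<Rightarrow> ('v \<times> 'f) op" where
  "cq P rho = (\<lambda>(v, i) (w, j). if v = w then complex_of_real (P v) * rho v i j else 0)"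

definition dcq :: "(('v::finite) \<Rightarrow> real) \<Rightarrow> ('v \<Rightarrow> ('f::finite) op) \<Rightarrow> real" where
  "dcq P rho = Inf {tnorm (\<lambda>a b. cq P rho a b - tensor unif_op sigma a b) | sigma::'f op. density sigma}"

end

theory Submission
  imports Defs "HOL-Analysis.Cartesian_Euclidean_Space" "HOL-Library.Function_Algebras"
begin

(* Since every g s m is a bijection of 'y, the pair (S', C) together with M determines Y, so
   the cq state of M E' S' C is the cq state of M' E' tensored with the uniform state of S' and
   relabelled by a bijection of the classical indices. Relabelling and tensoring with a uniform
   state leave the trace norm unchanged, so every candidate sigma for d(M'; E') yields the
   candidate sigma (x) P_{S'C} for d(M; E'S'C) at the same distance. The invariance of the trace
   norm rests on the uniqueness of positive square roots, which follows from the spectral theorem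
   for hermitian matrices; eigenvectors are obtained by maximising the quadratic form on unit
   spheres of invariant subspaces. *)

definition cinner :: "('n::finite \<Rightarrow> complex) \<Rightarrow> ('n \<Rightarrow> complex) \<Rightarrow> complex" where
  "cinner x y = (\<Sum>i\<in>UNIV. cnj (x i) * y i)"

definition mat_vec :: "('n::finite) op \<Rightarrow> ('n \<Rightarrow> complex) \<Rightarrow> ('n \<Rightarrow> complex)" where
  "mat_vec A x = (\<lambda>i. \<Sum>j\<in>UNIV. A i j * x j)"

definition cscale :: "complex \<Rightarrow> ('n \<Rightarrow> complex) \<Rightarrow> ('n \<Rightarrow> complex)" where
  "cscale c x = (\<lambda>i. c * x i)"

definition unit_vec :: "'n \<Rightarrow> 'n \<Rightarrow> complex" where
  "unit_vec i = (\<lambda>j. if j = i then 1 else 0)"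

lemma cinner_add_right: "cinner x (y + z) = cinner x y + cinner x z"
  by (simp add: cinner_def distrib_left sum.distrib)

lemma cinner_add_left: "cinner (x + y) z = cinner x z + cinner y z"
  by (simp add: cinner_def distrib_right sum.distrib)

lemma cinner_diff_right: "cinner x (y - z) = cinner x y - cinner x z"
  by (simp add: cinner_def right_diff_distrib sum_subtractf)

lemma cinner_cscale_right: "cinner x (cscale c y) = c * cinner x y"
  by (simp add: cinner_def cscale_def sum_distrib_left algebra_simps)

lemma cinner_cscale_left: "cinner (cscale c x) y = cnj c * cinner x y"
  by (simp add: cinner_def cscale_def sum_distrib_left algebra_simps)

lemma cinner_commute: "cinner y x = cnj (cinner x y)"
  by (simp add: cinner_def mult.commute)

lemma cinner_zero_right [simp]: "cinner x 0 = 0"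
  by (simp add: cinner_def)

lemma cinner_zero_left [simp]: "cinner 0 x = 0"
  by (simp add: cinner_def)

lemma cinner_sum_right: "cinner x (\<lambda>j. \<Sum>k\<in>K. c k * y k j) = (\<Sum>k\<in>K. c k * cinner x (y k))"
proof -
  have "cinner x (\<lambda>j. \<Sum>k\<in>K. c k * y k j) = (\<Sum>j\<in>UNIV. \<Sum>k\<in>K. c k * (cnj (x j) * y k j))"
    by (simp add: cinner_def sum_distrib_left mult_ac)
  also have "\<dots> = (\<Sum>k\<in>K. \<Sum>j\<in>UNIV. c k * (cnj (x j) * y k j))"
    by (rule sum.swap)
  finally show ?thesis
    by (simp add: cinner_def sum_distrib_left)
qed

lemma cinner_self: "cinner x x = of_real (\<Sum>i\<in>UNIV. (cmod (x i))\<^sup>2)"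
  unfolding cinner_def of_real_sum
  by (rule sum.cong) (simp_all only: complex_norm_square mult.commute)

lemma cinner_self_real: "cinner x x = of_real (Re (cinner x x))"
  by (simp add: cinner_self)

lemma Im_cinner_self [simp]: "Im (cinner x x) = 0"
  by (simp add: cinner_self)

lemma cinner_self_nonneg: "Re (cinner x x) \<ge> 0"
  by (simp add: cinner_self sum_nonneg)

lemma cinner_self_eq_0_iff: "Re (cinner x x) = 0 \<longleftrightarrow> x = 0"
proof
  assume "Re (cinner x x) = 0"
  then have "\<forall>i\<in>UNIV. (cmod (x i))\<^sup>2 = 0"
    unfolding cinner_self Re_complex_of_real by (subst (asm) sum_nonneg_eq_0_iff) auto
  then show "x = 0"
    by auto
qed simp

lemma cinner_unit_vec_left [simp]: "cinner (unit_vec i) x = x i"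
  by (simp add: cinner_def unit_vec_def if_distrib[of cnj] if_distrib[of "\<lambda>z. z * _"] cong: if_cong)

lemma cinner_unit_vec_right [simp]: "cinner x (unit_vec i) = cnj (x i)"
  by (simp add: cinner_def unit_vec_def if_distrib[of "\<lambda>z. _ * z"] cong: if_cong)

lemma norm_vec_nth_squared: "(norm (x :: complex^'n::finite))\<^sup>2 = Re (cinner (vec_nth x) (vec_nth x))"
  by (simp add: cinner_self norm_vec_def L2_set_def sum_nonneg)

lemma norm_eq_1_iff_cinner_self:
  "norm (x :: complex^'n::finite) = 1 \<longleftrightarrow> cinner (vec_nth x) (vec_nth x) = 1"
proof -
  have "norm x = 1 \<longleftrightarrow> (norm x)\<^sup>2 = 1"
    using power2_eq_iff_nonneg[OF norm_ge_zero[of x] zero_le_one] by simp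
  also have "\<dots> \<longleftrightarrow> Re (cinner (vec_nth x) (vec_nth x)) = 1"
    by (simp add: norm_vec_nth_squared)
  also have "\<dots> \<longleftrightarrow> cinner (vec_nth x) (vec_nth x) = 1"
    by (metis cinner_self_real of_real_eq_1_iff one_complex.sel(1))
  finally show ?thesis .
qed

lemma mat_vec_add: "mat_vec A (x + y) = mat_vec A x + mat_vec A y"
  by (simp add: mat_vec_def distrib_left sum.distrib fun_eq_iff)

lemma mat_vec_diff: "mat_vec A (x - y) = mat_vec A x - mat_vec A y"
  by (simp add: mat_vec_def right_diff_distrib sum_subtractf fun_eq_iff)

lemma mat_vec_op_diff: "mat_vec (A - B) x = mat_vec A x - mat_vec B x"
  by (simp add: mat_vec_def left_diff_distrib sum_subtractf fun_eq_iff)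

lemma mat_vec_cscale: "mat_vec A (cscale c x) = cscale c (mat_vec A x)"
  by (simp add: mat_vec_def cscale_def sum_distrib_left algebra_simps fun_eq_iff)

lemma mat_vec_unit_vec [simp]: "mat_vec A (unit_vec j) = (\<lambda>i. A i j)"
  by (simp add: mat_vec_def unit_vec_def if_distrib[of "\<lambda>z. _ * z"] cong: if_cong)

lemma mat_vec_opmult: "mat_vec (opmult A B) x = mat_vec A (mat_vec B x)"
proof
  fix i
  have "mat_vec (opmult A B) x i = (\<Sum>k\<in>UNIV. \<Sum>j\<in>UNIV. A i j * B j k * x k)"
    by (simp add: opmult_def mat_vec_def sum_distrib_right)
  also have "\<dots> = (\<Sum>j\<in>UNIV. \<Sum>k\<in>UNIV. A i j * B j k * x k)"
    by (rule sum.swap)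
  finally show "mat_vec (opmult A B) x i = mat_vec A (mat_vec B x) i"
    by (simp add: mat_vec_def sum_distrib_left mult_ac)
qed

lemma op_eqI: "(\<And>x. mat_vec A x = mat_vec B x) \<Longrightarrow> A = B"
  by (metis ext mat_vec_unit_vec)

lemma adj_adj [simp]: "adj (adj A) = A"
  by (simp add: adj_def)

lemma cinner_mat_vec_adj: "cinner x (mat_vec A y) = cinner (mat_vec (adj A) x) y"
proof -
  have "cinner x (mat_vec A y) = (\<Sum>i\<in>UNIV. \<Sum>j\<in>UNIV. cnj (x i) * A i j * y j)"
    by (simp add: cinner_def mat_vec_def sum_distrib_left mult.assoc)
  also have "\<dots> = (\<Sum>j\<in>UNIV. \<Sum>i\<in>UNIV. cnj (x i) * A i j * y j)"
    by (rule sum.swap)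
  finally show ?thesis
    by (simp add: cinner_def mat_vec_def adj_def sum_distrib_right sum_distrib_left mult_ac)
qed

lemma cinner_mat_vec_hermitian:
  "adj A = A \<Longrightarrow> cinner x (mat_vec A y) = cnj (cinner y (mat_vec A x))"
  by (metis cinner_commute cinner_mat_vec_adj)

lemma psd_iff_form:
  "psd A \<longleftrightarrow> (\<forall>x. Im (cinner x (mat_vec A x)) = 0 \<and> Re (cinner x (mat_vec A x)) \<ge> 0)"
proof -
  have "(\<Sum>i\<in>UNIV. \<Sum>j\<in>UNIV. cnj (x i) * A i j * x j) = cinner x (mat_vec A x)" for x
    by (simp add: cinner_def mat_vec_def sum_distrib_left mult.assoc)
  then show ?thesis
    by (simp only: psd_def)
qed

lemma psd_hermitian:
  assumes "psd A"
  shows "adj A = A"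
proof -
  let ?q = "\<lambda>z. cinner z (mat_vec A z)"
  have im: "Im (?q z) = 0" for z
    using assms by (simp add: psd_iff_form)
  have forms: "cinner x (mat_vec A y) = cnj (cinner y (mat_vec A x))" for x y
  proof -
    define a where "a = cinner x (mat_vec A y)"
    define b where "b = cinner y (mat_vec A x)"
    have "?q (x + y) = ?q x + ?q y + a + b"
      by (simp add: a_def b_def mat_vec_add cinner_add_left cinner_add_right)
    then have "Im a + Im b = 0"
      using im[of "x + y"] im[of x] im[of y] by simp
    moreover have "?q (x + cscale \<i> y) = ?q x + ?q y + \<i> * a - \<i> * b"
      by (simp add: a_def b_def mat_vec_add mat_vec_cscale cinner_add_left cinner_add_right
          cinner_cscale_left cinner_cscale_right algebra_simps)
    then have "Re a - Re b = 0"
      using im[of "x + cscale \<i> y"] im[of x] im[of y] by simp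
    ultimately show "a = cnj b"
      by (simp add: complex_eq_iff)
  qed
  have "adj A i j = A i j" for i j
    using forms[of "unit_vec i" "unit_vec j"] by (simp add: adj_def)
  then show ?thesis
    by (simp add: fun_eq_iff)
qed

lemma nonneg_quadratic_imp_linear_coeff_zero:
  fixes c d :: real
  assumes "\<And>t. 0 \<le> 2 * t * c + t\<^sup>2 * d"
  shows "c = 0"
proof (rule ccontr)
  assume c: "c \<noteq> 0"
  define e where "e = 1 / (\<bar>d\<bar> + 1)"
  have e: "e > 0" "e * d < 1"
    unfolding e_def using abs_ge_self[of d] by (simp_all add: field_simps)
  have "(c\<^sup>2 * e) * (e * d - 2) < 0"
    using c e by (intro mult_pos_neg) auto
  moreover have "2 * (- c * e) * c + (- c * e)\<^sup>2 * d = (c\<^sup>2 * e) * (e * d - 2)"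
    by (simp add: power2_eq_square algebra_simps)
  ultimately show False
    using assms[of "- c * e"] by simp
qed

text \<open>Otherwise the form would become negative somewhere on the real line \<open>v + t u\<close>.\<close>

lemma hermitian_form_null_vector:
  assumes herm: "adj E = E"
    and subspace: "\<And>w u c. w \<in> S \<Longrightarrow> u \<in> S \<Longrightarrow> w + cscale c u \<in> S"
    and nonneg: "\<And>w. w \<in> S \<Longrightarrow> Re (cinner w (mat_vec E w)) \<ge> 0"
    and "v \<in> S" "Re (cinner v (mat_vec E v)) = 0" "u \<in> S"
  shows "Re (cinner u (mat_vec E v)) = 0"
proof (rule nonneg_quadratic_imp_linear_coeff_zero)
  fix t :: real
  let ?c = "Re (cinner u (mat_vec E v))"
  have "Re (cinner v (mat_vec E u)) = ?c"
    using cinner_mat_vec_hermitian[OF herm, of v u] by simp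
  then have "Re (cinner (v + cscale t u) (mat_vec E (v + cscale t u)))
      = 2 * t * ?c + t\<^sup>2 * Re (cinner u (mat_vec E u))"
    using assms(5)
    by (simp add: mat_vec_add mat_vec_cscale cinner_add_left cinner_add_right cinner_cscale_left
        cinner_cscale_right power2_eq_square algebra_simps)
  then show "0 \<le> 2 * t * ?c + t\<^sup>2 * Re (cinner u (mat_vec E u))"
    using nonneg[OF subspace[OF \<open>v \<in> S\<close> \<open>u \<in> S\<close>, of "of_real t"]] by simp
qed

lemma psd_form_eq_0_imp_zero:
  assumes "psd B" "Re (cinner v (mat_vec B v)) = 0"
  shows "mat_vec B v = 0"
proof -
  have "Re (cinner (mat_vec B v) (mat_vec B v)) = 0"
    by (rule hermitian_form_null_vector[where S = UNIV])
      (use assms psd_hermitian in \<open>auto simp: psd_iff_form\<close>)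
  then show ?thesis
    by (simp add: cinner_self_eq_0_iff)
qed

definition orthonormal :: "(nat \<Rightarrow> 'n::finite \<Rightarrow> complex) \<Rightarrow> nat \<Rightarrow> bool" where
  "orthonormal f m \<longleftrightarrow> (\<forall>k<m. \<forall>l<m. cinner (f k) (f l) = (if k = l then 1 else 0))"

definition residual :: "(nat \<Rightarrow> 'n::finite \<Rightarrow> complex) \<Rightarrow> nat \<Rightarrow> 'n \<Rightarrow> 'n \<Rightarrow> complex" where
  "residual f m i = unit_vec i - (\<lambda>j. \<Sum>k<m. cnj (f k i) * f k j)"

lemma residual_orthogonal:
  assumes "orthonormal f m" "l < m"
  shows "cinner (f l) (residual f m i) = 0"
proof -
  have "(\<Sum>k<m. cnj (f k i) * cinner (f l) (f k)) = (\<Sum>k<m. if k = l then cnj (f l i) else 0)"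
    by (rule sum.cong) (use assms in \<open>auto simp: orthonormal_def\<close>)
  also have "\<dots> = cnj (f l i)"
    using assms(2) by simp
  finally show ?thesis
    unfolding residual_def cinner_diff_right cinner_sum_right by simp
qed

lemma sum_residual_norms:
  fixes f :: "nat \<Rightarrow> 'n::finite \<Rightarrow> complex"
  assumes "orthonormal f m"
  shows "(\<Sum>i\<in>UNIV. Re (cinner (residual f m i) (residual f m i))) = real CARD('n) - real m"
proof -
  have norm_residual: "Re (cinner (residual f m i) (residual f m i)) = 1 - (\<Sum>k<m. (cmod (f k i))\<^sup>2)"
    for i
  proof -
    let ?r = "residual f m i"
    have "cinner ?r (f k) = 0" if "k < m" for k
      using residual_orthogonal[OF assms that, of i] cinner_commute[of ?r "f k"] by simp
    then have "cinner ?r ?r = cinner ?r (unit_vec i)"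
      by (subst (2) residual_def) (simp only: cinner_diff_right cinner_sum_right, simp)
    also have "\<dots> = cnj (?r i)"
      by simp
    finally show ?thesis
      by (simp add: residual_def unit_vec_def cmod_power2 flip: power2_eq_square)
  qed
  have "(\<Sum>i\<in>UNIV. \<Sum>k<m. (cmod (f k i))\<^sup>2) = (\<Sum>k<m. \<Sum>i\<in>(UNIV::'n set). (cmod (f k i))\<^sup>2)"
    by (rule sum.swap)
  also have "\<dots> = (\<Sum>k<m. 1)"
  proof (rule sum.cong)
    fix k
    assume "k \<in> {..<m}"
    then have "cinner (f k) (f k) = 1"
      using assms by (simp add: orthonormal_def)
    then show "(\<Sum>i\<in>UNIV. (cmod (f k i))\<^sup>2) = 1"
      by (metis cinner_self of_real_eq_1_iff)
  qed simp
  finally show ?thesis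
    by (simp add: norm_residual sum_subtractf)
qed

lemma exists_orthogonal_nonzero:
  fixes f :: "nat \<Rightarrow> 'n::finite \<Rightarrow> complex"
  assumes "orthonormal f m" "m < CARD('n)"
  obtains w where "w \<noteq> 0" "\<forall>k<m. cinner (f k) w = 0"
proof -
  have "(\<Sum>i\<in>UNIV. Re (cinner (residual f m i) (residual f m i))) \<noteq> 0"
    using sum_residual_norms[OF assms(1)] assms(2) by simp
  then obtain i where "residual f m i \<noteq> 0"
    by (metis (no_types, lifting) cinner_zero_left sum.neutral zero_complex.sel(1))
  then show ?thesis
    using that residual_orthogonal[OF assms(1)] by blast
qed

text \<open>For a full orthonormal family the squared norms of the residuals sum to \<open>0\<close>.\<close>

lemma orthonormal_basis_complete:
  fixes f :: "nat \<Rightarrow> 'n::finite \<Rightarrow> complex"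
  assumes "orthonormal f CARD('n)"
  shows "(\<Sum>k<CARD('n). f k i * cnj (f k j)) = (if i = j then 1 else 0)"
proof -
  have "(\<Sum>i\<in>UNIV. Re (cinner (residual f CARD('n) i) (residual f CARD('n) i))) = 0"
    using sum_residual_norms[OF assms] by simp
  then have "\<forall>i\<in>UNIV. Re (cinner (residual f CARD('n) i) (residual f CARD('n) i)) = 0"
    by (subst (asm) sum_nonneg_eq_0_iff) (auto simp: cinner_self_nonneg)
  then have "residual f CARD('n) j i = 0"
    by (simp add: cinner_self_eq_0_iff)
  then have "(\<Sum>k<CARD('n). cnj (f k j) * f k i) = (if i = j then 1 else 0)"
    by (simp add: residual_def unit_vec_def)
  then show ?thesis
    by (simp add: mult.commute)
qed

section \<open>Spectral theorem for hermitian operators\<close>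

definition eigenvectors :: "('n::finite) op \<Rightarrow> (nat \<Rightarrow> 'n \<Rightarrow> complex) \<Rightarrow> (nat \<Rightarrow> real) \<Rightarrow> nat \<Rightarrow> bool" where
  "eigenvectors D f lam m \<longleftrightarrow> (\<forall>k<m. mat_vec D (f k) = cscale (of_real (lam k)) (f k))"

lemma cinner_cscale_cscale: "cinner (cscale c x) (cscale c y) = of_real ((cmod c)\<^sup>2) * cinner x y"
  by (simp only: cinner_cscale_left cinner_cscale_right complex_norm_square mult_ac)

lemma normalized_vector:
  assumes "u \<noteq> 0"
  defines "u' \<equiv> cscale (of_real (1 / sqrt (Re (cinner u u)))) u"
  shows "cinner u' u' = 1"
    and "Re (cinner u (mat_vec A u)) = Re (cinner u u) * Re (cinner u' (mat_vec A u'))"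
proof -
  define r where "r = Re (cinner u u)"
  have r: "r > 0"
    using assms(1) cinner_self_nonneg[of u] cinner_self_eq_0_iff[of u] by (auto simp: r_def)
  then have scale: "(cmod (of_real (1 / sqrt r)))\<^sup>2 = 1 / r"
    by (simp add: norm_divide power_divide)
  have "cinner u' u' = of_real (1 / r) * cinner u u"
    unfolding u'_def r_def[symmetric] cinner_cscale_cscale scale ..
  then show "cinner u' u' = 1"
    using r by (subst (asm) cinner_self_real) (simp flip: r_def of_real_mult)
  have "cinner u' (mat_vec A u') = of_real (1 / r) * cinner u (mat_vec A u)"
    unfolding u'_def r_def[symmetric] mat_vec_cscale cinner_cscale_cscale scale ..
  then show "Re (cinner u (mat_vec A u)) = Re (cinner u u) * Re (cinner u' (mat_vec A u'))"
    using r by (simp flip: r_def)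
qed

text \<open>Unit vectors are handled in \<^typ>\<open>complex^'n\<close>, whose Euclidean topology makes the unit
  sphere compact.\<close>

lemma exists_form_maximizer:
  fixes D :: "('n::finite) op" and f :: "nat \<Rightarrow> 'n \<Rightarrow> complex" and m :: nat
  defines "S \<equiv> {u. \<forall>k<m. cinner (f k) u = 0}"
  assumes "w \<noteq> 0" "\<forall>k<m. cinner (f k) w = 0"
  obtains v where "v \<in> S" "cinner v v = 1"
    "\<forall>u\<in>S. Re (cinner u (mat_vec D u)) \<le> Re (cinner v (mat_vec D v)) * Re (cinner u u)"
proof -
  define T where "T = {x :: complex^'n. norm x = 1 \<and> vec_nth x \<in> S}"
  define \<phi> where "\<phi> = (\<lambda>x :: complex^'n. Re (cinner (vec_nth x) (mat_vec D (vec_nth x))))"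
  have normalize: "vec_lambda u' \<in> T \<and> Re (cinner u (mat_vec D u)) = Re (cinner u u) * \<phi> (vec_lambda u')"
    if "u \<in> S" "u \<noteq> 0" and u': "u' = cscale (of_real (1 / sqrt (Re (cinner u u)))) u" for u u'
  proof -
    have "vec_nth (vec_lambda u') = u'"
      by (simp add: fun_eq_iff)
    moreover have "u' \<in> S"
      using \<open>u \<in> S\<close> by (simp add: u' S_def cinner_cscale_right)
    ultimately show ?thesis
      using norm_eq_1_iff_cinner_self[of "vec_lambda u'"] normalized_vector(1)[OF \<open>u \<noteq> 0\<close>, folded u']
        normalized_vector(2)[OF \<open>u \<noteq> 0\<close>, of D, folded u']
      by (simp add: T_def \<phi>_def)
  qed
  have "T = sphere 0 1 \<inter> (\<Inter>k\<in>{..<m}. {x. cinner (f k) (vec_nth x) = 0})"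
    by (auto simp: T_def S_def)
  moreover have "closed (\<Inter>k\<in>{..<m}. {x :: complex^'n. cinner (f k) (vec_nth x) = 0})"
    unfolding cinner_def by (intro closed_INT ballI closed_Collect_eq continuous_intros)
  ultimately have "compact T"
    by (simp add: compact_Int_closed)
  moreover have "T \<noteq> {}"
    using normalize[of w, OF _ assms(2) refl] assms(3) by (auto simp: S_def)
  moreover have "continuous_on T \<phi>"
    unfolding \<phi>_def cinner_def mat_vec_def by (intro continuous_intros)
  ultimately obtain x0 where x0: "x0 \<in> T" "\<forall>y\<in>T. \<phi> y \<le> \<phi> x0"
    using continuous_attains_sup by blast
  show ?thesis
  proof
    show "vec_nth x0 \<in> S" "cinner (vec_nth x0) (vec_nth x0) = 1"
      using x0(1) norm_eq_1_iff_cinner_self by (auto simp: T_def)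
    show "\<forall>u\<in>S. Re (cinner u (mat_vec D u)) \<le> Re (cinner (vec_nth x0) (mat_vec D (vec_nth x0))) * Re (cinner u u)"
    proof (intro ballI)
      fix u
      assume "u \<in> S"
      show "Re (cinner u (mat_vec D u)) \<le> Re (cinner (vec_nth x0) (mat_vec D (vec_nth x0))) * Re (cinner u u)"
      proof (cases "u = 0")
        case False
        then have "Re (cinner u (mat_vec D u)) \<le> Re (cinner u u) * \<phi> x0"
          using normalize[OF \<open>u \<in> S\<close> False refl] x0(2) cinner_self_nonneg[of u]
          by (simp add: mult_left_mono)
        then show ?thesis
          by (simp add: \<phi>_def mult.commute)
      qed simp
    qed
  qed
qed

text \<open>The form of \<open>l - D\<close>, with \<open>l\<close> the maximum, is nonnegative on the subspace and vanishes
  at \<open>v\<close>.\<close>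

lemma form_maximizer_eigenvector:
  assumes herm: "adj D = D"
    and subspace: "\<And>w u c. w \<in> S \<Longrightarrow> u \<in> S \<Longrightarrow> w + cscale c u \<in> S"
    and "v \<in> S" "mat_vec D v \<in> S" "cinner v v = 1"
    and max: "\<And>u. u \<in> S \<Longrightarrow> Re (cinner u (mat_vec D u)) \<le> Re (cinner v (mat_vec D v)) * Re (cinner u u)"
  shows "mat_vec D v = cscale (of_real (Re (cinner v (mat_vec D v)))) v"
proof -
  define l where "l = Re (cinner v (mat_vec D v))"
  define E where "E = (\<lambda>i j. (if i = j then complex_of_real l else 0) - D i j)"
  have E: "mat_vec E u = cscale (of_real l) u - mat_vec D u" for u
    by (simp add: E_def mat_vec_def cscale_def fun_eq_iff left_diff_distrib sum_subtractf
        if_distrib[of "\<lambda>z. z * _"] cong: if_cong)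
  have "adj E = E"
    using fun_cong[OF fun_cong[OF herm]] by (auto simp: adj_def E_def fun_eq_iff)
  moreover have "Re (cinner u (mat_vec E u)) \<ge> 0" if "u \<in> S" for u
    using max[OF that] by (simp add: E cinner_diff_right cinner_cscale_right l_def mult.commute)
  moreover have "Re (cinner v (mat_vec E v)) = 0"
    using \<open>cinner v v = 1\<close> by (simp add: E cinner_diff_right cinner_cscale_right l_def)
  moreover have "v + cscale (-1) v = 0"
    by (simp add: cscale_def fun_eq_iff)
  then have "0 \<in> S"
    using subspace[OF \<open>v \<in> S\<close> \<open>v \<in> S\<close>, of "-1"] by simp
  moreover have "mat_vec E v = (0 + cscale (of_real l) v) + cscale (-1) (mat_vec D v)"
    by (simp add: E cscale_def fun_eq_iff)
  then have "mat_vec E v \<in> S"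
    by (simp only:) (intro subspace \<open>0 \<in> S\<close> \<open>v \<in> S\<close> \<open>mat_vec D v \<in> S\<close>)
  ultimately have "Re (cinner (mat_vec E v) (mat_vec E v)) = 0"
    using hermitian_form_null_vector[OF _ subspace] \<open>v \<in> S\<close> by blast
  then show ?thesis
    by (simp add: cinner_self_eq_0_iff E l_def)
qed

lemma hermitian_preserves_orthogonal_complement:
  assumes "adj D = D" "eigenvectors D f lam m" "\<forall>k<m. cinner (f k) u = 0"
  shows "\<forall>k<m. cinner (f k) (mat_vec D u) = 0"
  using assms by (simp add: cinner_mat_vec_adj eigenvectors_def cinner_cscale_left)

lemma exists_orthonormal_eigenvectors:
  fixes D :: "('n::finite) op"
  assumes herm: "adj D = D"
  shows "m \<le> CARD('n) \<Longrightarrow> \<exists>(f :: nat \<Rightarrow> 'n \<Rightarrow> complex) lam. orthonormal f m \<and> eigenvectors D f lam m"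
proof (induction m)
  case 0
  show ?case
    by (simp add: orthonormal_def eigenvectors_def)
next
  case (Suc m)
  then obtain f lam where f: "orthonormal f m" "eigenvectors D f lam m"
    by auto
  define S where "S = {u. \<forall>k<m. cinner (f k) u = 0}"
  have "m < CARD('n)"
    using Suc.prems by simp
  then obtain w where "w \<noteq> 0" "\<forall>k<m. cinner (f k) w = 0"
    by (rule exists_orthogonal_nonzero[OF f(1)])
  then obtain v where v: "v \<in> S" "cinner v v = 1"
    and max: "\<forall>u\<in>S. Re (cinner u (mat_vec D u)) \<le> Re (cinner v (mat_vec D v)) * Re (cinner u u)"
    by (rule exists_form_maximizer[of w m f D, folded S_def])
  have "mat_vec D v \<in> S"
    using hermitian_preserves_orthogonal_complement[OF herm f(2)] v(1) by (simp add: S_def)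
  then have eig: "mat_vec D v = cscale (of_real (Re (cinner v (mat_vec D v)))) v"
    using form_maximizer_eigenvector[OF herm _ v(1) _ v(2) max[rule_format]]
    by (simp add: S_def cinner_add_right cinner_cscale_right)
  have "cinner v (f k) = 0" if "k < m" for k
    using v(1) that cinner_commute[of v "f k"] by (simp add: S_def)
  then have "orthonormal (f(m := v)) (Suc m)"
    using f(1) v v(1) by (auto simp: orthonormal_def less_Suc_eq S_def)
  moreover have "eigenvectors D (f(m := v)) (lam(m := Re (cinner v (mat_vec D v)))) (Suc m)"
    using f(2) eig by (auto simp: eigenvectors_def less_Suc_eq)
  ultimately show ?case
    by blast
qed

definition spectral_op :: "(nat \<Rightarrow> 'n::finite \<Rightarrow> complex) \<Rightarrow> (nat \<Rightarrow> complex) \<Rightarrow> 'n op" where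
  "spectral_op f c = (\<lambda>i j. \<Sum>k<CARD('n). c k * f k i * cnj (f k j))"

theorem hermitian_spectral_decomposition:
  fixes D :: "('n::finite) op"
  assumes "adj D = D"
  obtains f lam where "orthonormal f CARD('n)" "eigenvectors D f lam CARD('n)"
    "D = spectral_op f (\<lambda>k. of_real (lam k))"
proof -
  obtain f lam where f: "orthonormal f CARD('n)" "eigenvectors D f lam CARD('n)"
    using exists_orthonormal_eigenvectors[OF assms, of "CARD('n)"] by auto
  have "D i j = spectral_op f (\<lambda>k. of_real (lam k)) i j" for i j
  proof -
    have "D i j = (\<Sum>l\<in>UNIV. D i l * (\<Sum>k<CARD('n). f k l * cnj (f k j)))"
      by (simp add: orthonormal_basis_complete[OF f(1)] if_distrib[of "\<lambda>z. _ * z"] cong: if_cong)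
    also have "\<dots> = (\<Sum>k<CARD('n). \<Sum>l\<in>UNIV. D i l * f k l * cnj (f k j))"
      by (simp add: sum_distrib_left mult.assoc sum.swap[of _ UNIV])
    also have "\<dots> = (\<Sum>k<CARD('n). mat_vec D (f k) i * cnj (f k j))"
      by (simp add: mat_vec_def sum_distrib_right)
    also have "\<dots> = spectral_op f (\<lambda>k. of_real (lam k)) i j"
      unfolding spectral_op_def using f(2) by (intro sum.cong) (auto simp: eigenvectors_def cscale_def)
    finally show ?thesis .
  qed
  then have "D = spectral_op f (\<lambda>k. of_real (lam k))"
    by (simp add: fun_eq_iff)
  with f show ?thesis
    by (rule that)
qed

lemma mat_vec_spectral_op:
  fixes f :: "nat \<Rightarrow> 'n::finite \<Rightarrow> complex"
  shows "mat_vec (spectral_op f c) x = (\<lambda>i. \<Sum>k<CARD('n). (c k * cinner (f k) x) * f k i)"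
proof
  fix i
  have "mat_vec (spectral_op f c) x i = (\<Sum>j\<in>UNIV. \<Sum>k<CARD('n). c k * f k i * (cnj (f k j) * x j))"
    by (simp add: mat_vec_def spectral_op_def sum_distrib_right mult.assoc)
  also have "\<dots> = (\<Sum>k<CARD('n). \<Sum>j\<in>UNIV. c k * f k i * (cnj (f k j) * x j))"
    by (rule sum.swap)
  finally show "mat_vec (spectral_op f c) x i = (\<Sum>k<CARD('n). (c k * cinner (f k) x) * f k i)"
    by (simp add: cinner_def sum_distrib_left mult_ac)
qed

lemma cinner_spectral_op:
  fixes f :: "nat \<Rightarrow> 'n::finite \<Rightarrow> complex"
  assumes "orthonormal f CARD('n)" "l < CARD('n)"
  shows "cinner (f l) (mat_vec (spectral_op f c) x) = c l * cinner (f l) x"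
proof -
  have "cinner (f l) (mat_vec (spectral_op f c) x)
      = (\<Sum>k<CARD('n). (c k * cinner (f k) x) * cinner (f l) (f k))"
    unfolding mat_vec_spectral_op cinner_sum_right ..
  also have "\<dots> = (\<Sum>k<CARD('n). if k = l then c l * cinner (f l) x else 0)"
    by (rule sum.cong) (use assms in \<open>auto simp: orthonormal_def\<close>)
  finally show ?thesis
    using assms(2) by simp
qed

lemma opmult_spectral_op:
  fixes f :: "nat \<Rightarrow> 'n::finite \<Rightarrow> complex"
  assumes "orthonormal f CARD('n)"
  shows "opmult (spectral_op f c) (spectral_op f d) = spectral_op f (\<lambda>k. c k * d k)"
proof (rule op_eqI)
  fix x
  have "mat_vec (spectral_op f c) (mat_vec (spectral_op f d) x)
      = (\<lambda>i. \<Sum>k<CARD('n). ((c k * d k) * cinner (f k) x) * f k i)"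
    unfolding mat_vec_spectral_op[of f c]
    by (intro ext sum.cong) (simp_all add: cinner_spectral_op[OF assms] mult.assoc)
  then show "mat_vec (opmult (spectral_op f c) (spectral_op f d)) x
      = mat_vec (spectral_op f (\<lambda>k. c k * d k)) x"
    by (simp add: mat_vec_opmult mat_vec_spectral_op)
qed

lemma spectral_op_cong:
  fixes f :: "nat \<Rightarrow> 'n::finite \<Rightarrow> complex"
  shows "(\<And>k. k < CARD('n) \<Longrightarrow> c k = d k) \<Longrightarrow> spectral_op f c = spectral_op f d"
  unfolding spectral_op_def by (intro ext sum.cong) auto

lemma psd_spectral_op:
  fixes f :: "nat \<Rightarrow> 'n::finite \<Rightarrow> complex"
  assumes "\<And>k. k < CARD('n) \<Longrightarrow> r k \<ge> 0"
  shows "psd (spectral_op f (\<lambda>k. of_real (r k)))"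
  unfolding psd_iff_form
proof
  fix x
  have "cinner x (mat_vec (spectral_op f (\<lambda>k. of_real (r k))) x)
      = (\<Sum>k<CARD('n). (of_real (r k) * cinner (f k) x) * cinner x (f k))"
    unfolding mat_vec_spectral_op cinner_sum_right ..
  also have "\<dots> = of_real (\<Sum>k<CARD('n). r k * (cmod (cinner (f k) x))\<^sup>2)"
    unfolding of_real_sum
    by (intro sum.cong) (simp_all only: cinner_commute[of x] of_real_mult complex_norm_square mult.assoc)
  finally show "Im (cinner x (mat_vec (spectral_op f (\<lambda>k. of_real (r k))) x)) = 0 \<and>
      0 \<le> Re (cinner x (mat_vec (spectral_op f (\<lambda>k. of_real (r k))) x))"
    unfolding Im_complex_of_real Re_complex_of_real using assms by (auto intro!: sum_nonneg)
qed

section \<open>The positive square root and the trace norm\<close>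

lemma psd_adj_mult: "psd (opmult (adj A) A)"
proof -
  have "cinner x (mat_vec (opmult (adj A) A) x) = cinner (mat_vec A x) (mat_vec A x)" for x
    using cinner_mat_vec_adj[of x "adj A"] by (simp add: mat_vec_opmult)
  then show ?thesis
    by (simp add: psd_iff_form cinner_self_nonneg)
qed

lemma psd_sqrt_exists:
  fixes P :: "('n::finite) op"
  assumes "psd P"
  obtains B where "psd B" "opmult B B = P"
proof -
  obtain f lam where f: "orthonormal f CARD('n)" "eigenvectors P f lam CARD('n)"
    "P = spectral_op f (\<lambda>k. of_real (lam k))"
    by (rule hermitian_spectral_decomposition[OF psd_hermitian[OF assms]])
  have lam: "lam k \<ge> 0" if "k < CARD('n)" for k
  proof -
    have "cinner (f k) (mat_vec P (f k)) = of_real (lam k)"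
      using f(1,2) that by (simp add: eigenvectors_def cinner_cscale_right orthonormal_def)
    moreover have "Re (cinner (f k) (mat_vec P (f k))) \<ge> 0"
      using assms by (simp add: psd_iff_form)
    ultimately show ?thesis
      by simp
  qed
  show ?thesis
  proof
    show "psd (spectral_op f (\<lambda>k. of_real (sqrt (lam k))))"
      by (rule psd_spectral_op) (simp add: lam)
    show "opmult (spectral_op f (\<lambda>k. of_real (sqrt (lam k)))) (spectral_op f (\<lambda>k. of_real (sqrt (lam k)))) = P"
      unfolding opmult_spectral_op[OF f(1)] f(3)
      by (rule spectral_op_cong) (simp add: lam flip: of_real_mult)
  qed
qed

text \<open>\<open>\<mu> (\<langle>v, B\<^sub>1 v\<rangle> + \<langle>v, B\<^sub>2 v\<rangle>) = \<langle>v, (B\<^sub>1\<^sup>2 - B\<^sub>2\<^sup>2) v\<rangle> = 0\<close>, and both forms are nonnegative, so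
  \<open>\<mu> \<noteq> 0\<close> would force \<open>B\<^sub>1 v = B\<^sub>2 v = 0\<close>.\<close>

lemma eigenvalue_diff_of_psd_sqrts:
  assumes psd: "psd B\<^sub>1" "psd B\<^sub>2" and sq: "opmult B\<^sub>1 B\<^sub>1 = opmult B\<^sub>2 B\<^sub>2"
    and eig: "mat_vec (B\<^sub>1 - B\<^sub>2) v = cscale (of_real \<mu>) v" and "cinner v v = 1"
  shows "\<mu> = 0"
proof (rule ccontr)
  assume "\<mu> \<noteq> 0"
  let ?D = "B\<^sub>1 - B\<^sub>2"
  have "adj ?D = ?D"
    using psd_hermitian[OF psd(1)] psd_hermitian[OF psd(2)] by (simp add: adj_def fun_eq_iff)
  then have "cinner v (mat_vec ?D (mat_vec B\<^sub>2 v)) = cinner (mat_vec ?D v) (mat_vec B\<^sub>2 v)"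
    using cinner_mat_vec_adj[of v ?D] by simp
  also have "\<dots> = of_real \<mu> * cinner v (mat_vec B\<^sub>2 v)"
    by (simp add: eig cinner_cscale_left)
  finally have "cinner v (mat_vec ?D (mat_vec B\<^sub>2 v)) = of_real \<mu> * cinner v (mat_vec B\<^sub>2 v)" .
  moreover have "mat_vec B\<^sub>1 (mat_vec ?D v) + mat_vec ?D (mat_vec B\<^sub>2 v)
      = mat_vec (opmult B\<^sub>1 B\<^sub>1) v - mat_vec (opmult B\<^sub>2 B\<^sub>2) v"
    by (simp add: mat_vec_op_diff mat_vec_diff mat_vec_opmult)
  then have "mat_vec B\<^sub>1 (mat_vec ?D v) + mat_vec ?D (mat_vec B\<^sub>2 v) = 0"
    by (simp add: sq)
  then have "cinner v (mat_vec B\<^sub>1 (mat_vec ?D v)) + cinner v (mat_vec ?D (mat_vec B\<^sub>2 v)) = 0"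
    unfolding cinner_add_right[symmetric] by simp
  ultimately have "of_real \<mu> * (cinner v (mat_vec B\<^sub>1 v) + cinner v (mat_vec B\<^sub>2 v)) = 0"
    by (simp add: eig mat_vec_cscale cinner_cscale_right distrib_left)
  then have "cinner v (mat_vec B\<^sub>1 v) + cinner v (mat_vec B\<^sub>2 v) = 0"
    using \<open>\<mu> \<noteq> 0\<close> by simp
  then have "Re (cinner v (mat_vec B\<^sub>1 v) + cinner v (mat_vec B\<^sub>2 v)) = 0"
    by simp
  then have "Re (cinner v (mat_vec B\<^sub>1 v)) + Re (cinner v (mat_vec B\<^sub>2 v)) = 0"
    by (simp only: plus_complex.sel)
  moreover have "Re (cinner v (mat_vec B\<^sub>1 v)) \<ge> 0" "Re (cinner v (mat_vec B\<^sub>2 v)) \<ge> 0"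
    using psd by (auto simp: psd_iff_form)
  ultimately have "Re (cinner v (mat_vec B\<^sub>1 v)) = 0" "Re (cinner v (mat_vec B\<^sub>2 v)) = 0"
    by linarith+
  then have "mat_vec B\<^sub>1 v = 0" "mat_vec B\<^sub>2 v = 0"
    using psd psd_form_eq_0_imp_zero by blast+
  then have "cinner v (cscale (of_real \<mu>) v) = 0"
    by (simp flip: eig add: mat_vec_op_diff)
  with \<open>\<mu> \<noteq> 0\<close> \<open>cinner v v = 1\<close> show False
    by (simp add: cinner_cscale_right)
qed

lemma psd_sqrt_unique:
  fixes B\<^sub>1 B\<^sub>2 :: "('n::finite) op"
  assumes "psd B\<^sub>1" "psd B\<^sub>2" "opmult B\<^sub>1 B\<^sub>1 = opmult B\<^sub>2 B\<^sub>2"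
  shows "B\<^sub>1 = B\<^sub>2"
proof -
  have "adj (B\<^sub>1 - B\<^sub>2) = B\<^sub>1 - B\<^sub>2"
    using psd_hermitian[OF assms(1)] psd_hermitian[OF assms(2)] by (simp add: adj_def fun_eq_iff)
  then obtain f \<mu> where f: "orthonormal f CARD('n)" "eigenvectors (B\<^sub>1 - B\<^sub>2) f \<mu> CARD('n)"
    "B\<^sub>1 - B\<^sub>2 = spectral_op f (\<lambda>k. of_real (\<mu> k))"
    by (rule hermitian_spectral_decomposition)
  have "\<mu> k = 0" if "k < CARD('n)" for k
    using eigenvalue_diff_of_psd_sqrts[OF assms, of "f k" "\<mu> k"] f(1,2) that
    by (simp add: eigenvectors_def orthonormal_def)
  then have "B\<^sub>1 - B\<^sub>2 = spectral_op f (\<lambda>k. 0)"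
    unfolding f(3) by (intro spectral_op_cong) simp
  then show ?thesis
    by (simp add: spectral_op_def fun_eq_iff)
qed

lemma ex1_psd_sqrt_adj_mult: "\<exists>!B. psd B \<and> opmult B B = opmult (adj A) A"
proof -
  obtain B where B: "psd B" "opmult B B = opmult (adj A) A"
    using psd_sqrt_exists[OF psd_adj_mult] .
  show ?thesis
  proof (rule ex1I[of _ B])
    fix B'
    assume "psd B' \<and> opmult B' B' = opmult (adj A) A"
    then show "B' = B"
      using B psd_sqrt_unique[of B' B] by simp
  qed (use B in simp)
qed

lemma absop: "psd (absop A)" "opmult (absop A) (absop A) = opmult (adj A) A"
  unfolding absop_def using theI'[OF ex1_psd_sqrt_adj_mult[of A]] by simp_all

lemma absop_eqI: "psd B \<Longrightarrow> opmult B B = opmult (adj A) A \<Longrightarrow> absop A = B"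
  unfolding absop_def by (rule the1_equality[OF ex1_psd_sqrt_adj_mult]) simp

lemma tnorm_nonneg: "tnorm A \<ge> 0"
proof -
  have "Re (absop A i i) \<ge> 0" for i
    using absop(1)[of A] by (auto simp: psd_iff_form dest: spec[of _ "unit_vec i"])
  then show ?thesis
    by (simp add: tnorm_def tr_def Re_sum sum_nonneg)
qed

section \<open>Invariance of the trace norm\<close>

definition reindex_op :: "('a \<Rightarrow> 'b) \<Rightarrow> 'b op \<Rightarrow> 'a op" where
  "reindex_op \<phi> A = (\<lambda>i j. A (\<phi> i) (\<phi> j))"

lemma adj_reindex_op: "adj (reindex_op \<phi> A) = reindex_op \<phi> (adj A)"
  by (simp add: adj_def reindex_op_def)

context
  fixes \<phi> :: "'a::finite \<Rightarrow> 'b::finite"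
  assumes bij: "bij \<phi>"
begin

lemma opmult_reindex_op: "opmult (reindex_op \<phi> A) (reindex_op \<phi> B) = reindex_op \<phi> (opmult A B)"
  by (simp add: opmult_def reindex_op_def sum.reindex_bij_betw[OF bij, of "\<lambda>j. A _ j * B j _"])

lemma tr_reindex_op: "tr (reindex_op \<phi> A) = tr A"
  by (simp add: tr_def reindex_op_def sum.reindex_bij_betw[OF bij, of "\<lambda>y. A y y"])

lemma cinner_comp: "cinner (x \<circ> \<phi>) (y \<circ> \<phi>) = cinner x y"
  unfolding cinner_def using sum.reindex_bij_betw[OF bij, of "\<lambda>i. cnj (x i) * y i"] by simp

lemma mat_vec_reindex_op: "mat_vec (reindex_op \<phi> A) (x \<circ> \<phi>) = mat_vec A x \<circ> \<phi>"
  unfolding mat_vec_def reindex_op_def using sum.reindex_bij_betw[OF bij, of "\<lambda>j. A _ j * x j"] by (simp add: o_def)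

lemma psd_reindex_op:
  assumes "psd A"
  shows "psd (reindex_op \<phi> A)"
  unfolding psd_iff_form
proof
  fix x :: "'a \<Rightarrow> complex"
  define y where "y = x \<circ> inv \<phi>"
  have x: "x = y \<circ> \<phi>"
    using bij by (simp add: y_def bij_is_inj fun_eq_iff)
  have "cinner x (mat_vec (reindex_op \<phi> A) x) = cinner y (mat_vec A y)"
    unfolding x mat_vec_reindex_op cinner_comp ..
  then show "Im (cinner x (mat_vec (reindex_op \<phi> A) x)) = 0 \<and> 0 \<le> Re (cinner x (mat_vec (reindex_op \<phi> A) x))"
    using assms by (simp add: psd_iff_form)
qed

lemma tnorm_reindex_op: "tnorm (reindex_op \<phi> A) = tnorm A"
proof -
  have "absop (reindex_op \<phi> A) = reindex_op \<phi> (absop A)"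
    by (rule absop_eqI) (simp_all add: psd_reindex_op absop opmult_reindex_op adj_reindex_op)
  then show ?thesis
    by (simp add: tnorm_def tr_reindex_op)
qed

end

lemma sum_UNIV_prod:
  "(\<Sum>p\<in>(UNIV :: ('a::finite \<times> 'b::finite) set). h p) = (\<Sum>a\<in>UNIV. \<Sum>b\<in>UNIV. h (a, b))"
  by (simp add: sum.cartesian_product)

lemma opmult_tensor: "opmult (tensor A B) (tensor C D) = tensor (opmult A C) (opmult B D)"
  for A C :: "('a::finite) op" and B D :: "('b::finite) op"
  by (simp add: opmult_def tensor_def sum_UNIV_prod fun_eq_iff split_beta sum_product mult_ac)

lemma adj_tensor: "adj (tensor A B) = tensor (adj A) (adj B)"
  by (simp add: adj_def tensor_def fun_eq_iff split_beta)

lemma tr_tensor: "tr (tensor A B) = tr A * tr B"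
  for A :: "('a::finite) op" and B :: "('b::finite) op"
  by (simp add: tr_def tensor_def sum_UNIV_prod sum_product)

lemma tr_unif_op: "tr (unif_op :: ('s::finite) op) = 1"
  by (simp add: tr_def unif_op_def)

lemma adj_unif_op: "adj (unif_op :: ('s::finite) op) = unif_op"
  by (simp add: adj_def unif_op_def fun_eq_iff)

lemma mat_vec_unif_op: "mat_vec (unif_op :: ('s::finite) op) x = cscale (1 / of_nat CARD('s)) x"
  by (simp add: mat_vec_def unif_op_def cscale_def fun_eq_iff if_distrib[of "\<lambda>z. z * _"] cong: if_cong)

lemma density_unif_op: "density (unif_op :: ('s::finite) op)"
proof -
  have "cinner x (mat_vec (unif_op :: 's op) x) = of_real (1 / real CARD('s)) * cinner x x" for x
    by (simp add: mat_vec_unif_op cinner_cscale_right)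
  then show ?thesis
    by (simp add: density_def psd_iff_form tr_unif_op cinner_self_nonneg)
qed

lemma mat_vec_tensor_unif_op:
  fixes A :: "('a::finite) op"
  shows "mat_vec (tensor A (unif_op :: ('s::finite) op)) x (i, k) = (1 / of_nat CARD('s)) * mat_vec A (\<lambda>j. x (j, k)) i"
  by (simp add: mat_vec_def tensor_def unif_op_def sum_UNIV_prod sum_distrib_left mult_ac
      if_distrib[of "\<lambda>z. z * _"] if_distrib[of "\<lambda>z. _ * z"] cong: if_cong)

lemma psd_tensor_unif_op:
  fixes A :: "('a::finite) op"
  assumes "psd A"
  shows "psd (tensor A (unif_op :: ('s::finite) op))"
  unfolding psd_iff_form
proof
  fix x :: "'a \<times> 's \<Rightarrow> complex"
  let ?x = "\<lambda>k j. x (j, k)"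
  have "cinner x (mat_vec (tensor A (unif_op :: 's op)) x)
      = (1 / of_nat CARD('s)) * (\<Sum>k\<in>UNIV. cinner (?x k) (mat_vec A (?x k)))"
    unfolding cinner_def sum_UNIV_prod mat_vec_tensor_unif_op
    by (subst sum.swap) (simp add: sum_distrib_left mult_ac)
  moreover have "Im (cinner (?x k) (mat_vec A (?x k))) = 0" "Re (cinner (?x k) (mat_vec A (?x k))) \<ge> 0" for k
    using assms by (auto simp: psd_iff_form)
  ultimately show "Im (cinner x (mat_vec (tensor A (unif_op :: 's op)) x)) = 0 \<and>
      0 \<le> Re (cinner x (mat_vec (tensor A (unif_op :: 's op)) x))"
    by (simp add: Im_sum Re_sum sum_nonneg)
qed

lemma density_tensor_unif_op: "density A \<Longrightarrow> density (tensor A (unif_op :: ('s::finite) op))"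
  for A :: "('a::finite) op"
  by (simp add: density_def psd_tensor_unif_op tr_tensor tr_unif_op)

lemma tnorm_tensor_unif_op: "tnorm (tensor A (unif_op :: ('s::finite) op)) = tnorm A"
  for A :: "('a::finite) op"
proof -
  have "absop (tensor A (unif_op :: 's op)) = tensor (absop A) unif_op"
    by (rule absop_eqI) (simp_all add: psd_tensor_unif_op absop opmult_tensor adj_tensor adj_unif_op)
  then show ?thesis
    by (simp add: tnorm_def tr_tensor tr_unif_op)
qed

section \<open>Encoding with a family of bijections\<close>

lemma dcq_le_dcqI:
  fixes P :: "'v::finite \<Rightarrow> real" and P' :: "'v'::finite \<Rightarrow> real"
    and rho :: "'v \<Rightarrow> ('f::finite) op" and rho' :: "'v' \<Rightarrow> ('f'::finite) op"
    and \<tau> :: "'f op \<Rightarrow> 'f' op"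
  assumes "\<And>\<sigma>. density \<sigma> \<Longrightarrow> density (\<tau> \<sigma>)"
    and "\<And>\<sigma>. density \<sigma> \<Longrightarrow> tnorm (\<lambda>a b. cq P' rho' a b - tensor unif_op (\<tau> \<sigma>) a b)
      \<le> tnorm (\<lambda>a b. cq P rho a b - tensor unif_op \<sigma> a b)"
  shows "dcq P' rho' \<le> dcq P rho"
  unfolding dcq_def
proof (rule cInf_mono)
  show "{tnorm (\<lambda>a b. cq P rho a b - tensor unif_op \<sigma> a b) | \<sigma> :: 'f op. density \<sigma>} \<noteq> {}"
    using density_unif_op by blast
  show "bdd_below {tnorm (\<lambda>a b. cq P' rho' a b - tensor unif_op \<sigma> a b) | \<sigma> :: 'f' op. density \<sigma>}"
    by (rule bdd_belowI[of _ 0]) (auto simp: tnorm_nonneg)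
qed (use assms in blast)

text \<open>With \<open>h s m\<close> inverse to \<open>g s m\<close>, the state of \<open>M E' S' C\<close> (minus \<open>P\<^sub>M \<otimes> \<sigma> \<otimes> P\<^sub>S\<^sub>'\<^sub>C\<close>)
  is the state of \<open>M' E'\<close> (minus \<open>P\<^sub>M\<^sub>' \<otimes> \<sigma>\<close>), tensored with the uniform \<open>S'\<close> and relabelled
  by \<open>(m, e, s, c) \<mapsto> (((m, h s m c), e), s)\<close>.\<close>

lemma encoded_cq_eq_reindex_op:
  fixes g :: "'s::finite \<Rightarrow> 'm::finite \<Rightarrow> 'y::finite \<Rightarrow> 'y"
    and rho :: "'m \<times> 'y \<Rightarrow> ('e::finite) op" and \<sigma> :: "'e op"
  assumes h: "\<And>s m y. h s m (g s m y) = y" "\<And>s m c. g s m (h s m c) = c"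
  shows "(\<lambda>a b. cq (\<lambda>m::'m. 1 / real CARD('m))
           (\<lambda>m. \<lambda>(e, s, c) (e', s', c'). if s = s' \<and> c = c'
               then (\<Sum>y\<in>{y. g s m y = c}. rho (m, y) e e') / (of_nat CARD('y) * of_nat CARD('s))
               else 0) a b
         - tensor unif_op (tensor \<sigma> (unif_op :: ('s \<times> 'y) op)) a b)
    = reindex_op (\<lambda>(m, e, s, c). (((m, h s m c), e), s))
        (tensor (\<lambda>a b. cq (\<lambda>my::'m \<times> 'y. 1 / (real CARD('m) * real CARD('y))) rho a b
                       - tensor unif_op \<sigma> a b) (unif_op :: 's op))"
    (is "?L = ?R")
proof (intro ext)
  fix a b :: "'m \<times> 'e \<times> 's \<times> 'y"
  obtain m e s c where a: "a = (m, e, s, c)"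
    by (cases a) auto
  obtain m' e' s' c' where b: "b = (m', e', s', c')"
    by (cases b) auto
  have "{y. g s m y = c} = {h s m c}"
    using h by auto
  moreover have "h s m c = h s m c'' \<longleftrightarrow> c = c''" for c''
    using h by metis
  ultimately show "?L a b = ?R a b"
    unfolding a b
    by (cases "m = m'"; cases "s = s'"; cases "c = c'")
      (auto simp: cq_def tensor_def unif_op_def reindex_op_def field_simps)
qed

theorem lemma3:
  fixes g :: "'s::finite \<Rightarrow> 'm::finite \<Rightarrow> 'y::finite \<Rightarrow> 'y"
    and rho :: "'m \<times> 'y \<Rightarrow> ('e::finite) op"
  assumes univ: "\<And>m y m' y'. (m, y) \<noteq> (m', y') \<Longrightarrow>
      real (card {s. g s m y = g s m' y'}) / real (card (UNIV :: 's set)) \<le> 1 / real (card (UNIV :: 'y set))"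
    and inv: "\<And>m c s. \<exists>!y. g s m y = c"
    and dens: "\<And>my. density (rho my)"
  shows "dcq (\<lambda>m::'m. 1 / real (card (UNIV :: 'm set)))
           (\<lambda>m. \<lambda>(e, s, c) (e', s', c'). if s = s' \<and> c = c'
               then (\<Sum>y\<in>{y. g s m y = c}. rho (m, y) e e')
                    / (of_nat (card (UNIV :: 'y set)) * of_nat (card (UNIV :: 's set)))
               else 0)
         \<le> dcq (\<lambda>my::'m \<times> 'y. 1 / (real (card (UNIV :: 'm set)) * real (card (UNIV :: 'y set)))) rho"
proof -
  define h where "h s m c = (THE y. g s m y = c)" for s m c
  have h: "h s m (g s m y) = y" "g s m (h s m c) = c" for s m y c
    unfolding h_def by (simp_all add: the1_equality[OF inv] theI'[OF inv])
  have bij: "bij (\<lambda>(m, e, s, c). (((m, h s m c), e), s))"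
    by (rule o_bij[of "\<lambda>(((m, y), e), s). (m, e, s, g s m y)"]) (auto simp: fun_eq_iff h)
  show ?thesis
    by (rule dcq_le_dcqI[where \<tau> = "\<lambda>\<sigma>. tensor \<sigma> (unif_op :: ('s \<times> 'y) op)"])
      (simp_all only: density_tensor_unif_op encoded_cq_eq_reindex_op[where g = g and h = h, OF h]
        tnorm_reindex_op[OF bij] tnorm_tensor_unif_op order_refl)
qed

end
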